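(* Let $P_1$ and $P_2$ be non-constant rational functions with real coefficients such that $\mathbb{R}(P_1,P_2)=\mathbb{R}(z)$, i.e. $P_1$ and $P_2$ generate the whole field $\mathbb{R}(z)$ of real rational functions. Then $P_1^{-1}(\widehat{\mathbb{R}})\cap P_2^{-1}(\widehat{\mathbb{R}})=\widehat{\mathbb{R}}\cup A$, where $A$ is a finite subset of $\mathbb{CP}^1$.
   Context: $\widehat{\mathbb{R}}=\mathbb{R}\cup\{\infty\}\subset\mathbb{CP}^1$ denotes the projectively extended real line; $P_1,P_2$ are viewed as maps $\mathbb{CP}^1\to\mathbb{CP}^1$ and preimages are taken in $\mathbb{CP}^1$. *)

theory Defs
  imports "HOL-Analysis.Analysis" "HOL-Computational_Algebra.Computational_Algebra" "HOL-Computational_Algebra.Field_as_Ring"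
begin

text \<open>The Riemann sphere CP^1 is modelled as complex option: Some z is the finite
point z, None is the point at infinity.\<close>

type_synonym riemann_sphere = "complex option"

type_synonym real_ratfun = "real poly fract"

definition const_ratfun :: "real \<Rightarrow> real_ratfun" where
  "const_ratfun c = to_fract [:c:]"

text \<open>The rational function as a map CP^1 \<rightarrow> CP^1, computed from its reduced
representation p/q (coprime, q monic).\<close>
definition ratfun_map :: "real_ratfun \<Rightarrow> riemann_sphere \<Rightarrow> riemann_sphere" where
  "ratfun_map f w =
     (let (p, q) = quot_of_fract f;
          pc = map_poly complex_of_real p;
          qc = map_poly complex_of_real q
      in case w of
           Some z \<Rightarrow> (if poly qc z \<noteq> 0 then Some (poly pc z / poly qc z) else None)
         | None \<Rightarrow> (if degree p > degree q then None
                    else if degree p = degree q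
                      then Some (complex_of_real (lead_coeff p / lead_coeff q))
                    else Some 0))"

definition ext_real_line :: "riemann_sphere set" where
  "ext_real_line = insert None (Some ` (complex_of_real ` UNIV))"

inductive_set gen_subfield :: "real_ratfun \<Rightarrow> real_ratfun \<Rightarrow> real_ratfun set"
  for P1 P2 :: real_ratfun where
  const: "const_ratfun c \<in> gen_subfield P1 P2"
| gen1: "P1 \<in> gen_subfield P1 P2"
| gen2: "P2 \<in> gen_subfield P1 P2"
| add: "f \<in> gen_subfield P1 P2 \<Longrightarrow> g \<in> gen_subfield P1 P2 \<Longrightarrow> f + g \<in> gen_subfield P1 P2"
| neg: "f \<in> gen_subfield P1 P2 \<Longrightarrow> - f \<in> gen_subfield P1 P2"
| mult: "f \<in> gen_subfield P1 P2 \<Longrightarrow> g \<in> gen_subfield P1 P2 \<Longrightarrow> f * g \<in> gen_subfield P1 P2"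
| inv: "f \<in> gen_subfield P1 P2 \<Longrightarrow> inverse f \<in> gen_subfield P1 P2"

end

theory Submission
  imports Defs
begin

text \<open>Since \<open>\<real>(P1,P2) = \<real>(z)\<close>, the coordinate \<open>z\<close> is a rational expression in \<open>P1\<close> and
  \<open>P2\<close> with real coefficients. Evaluating real rational functions commutes with the field
  operations away from poles, so at every point where \<open>P1\<close> and \<open>P2\<close> take finite real
  values this expression, and hence \<open>z\<close> itself, is real, except at the finitely many poles
  of its intermediate terms.\<close>

lemma map_poly_of_real_add:
  "map_poly of_real (p + q) = (map_poly of_real p + map_poly of_real q :: 'a::real_algebra_1 poly)"
  by (intro poly_eqI) (simp add: coeff_map_poly)

lemma map_poly_of_real_uminus:
  "map_poly of_real (- p) = (- map_poly of_real p :: 'a::real_algebra_1 poly)"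
  by (intro poly_eqI) (simp add: coeff_map_poly)

lemma map_poly_of_real_mult:
  "map_poly of_real (p * q) =
     (map_poly of_real p * map_poly of_real q :: 'a::{real_algebra_1,comm_ring_1} poly)"
  by (intro poly_eqI) (simp add: coeff_map_poly coeff_mult)

definition denom_poly :: "real_ratfun \<Rightarrow> complex poly" where
  "denom_poly f = map_poly of_real (snd (quot_of_fract f))"

definition ratfun_poles :: "real_ratfun \<Rightarrow> complex set" where
  "ratfun_poles f = {z. poly (denom_poly f) z = 0}"

text \<open>At a pole the division by zero makes the value a junk \<open>0\<close>.\<close>

definition ratfun_eval :: "real_ratfun \<Rightarrow> complex \<Rightarrow> complex" where
  "ratfun_eval f z = poly (map_poly of_real (fst (quot_of_fract f))) z / poly (denom_poly f) z"

lemma finite_ratfun_poles: "finite (ratfun_poles f)"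
  unfolding ratfun_poles_def denom_poly_def
  by (rule poly_roots_finite) (simp add: map_poly_eq_0_iff)

lemma ratfun_map_Some:
  "ratfun_map f (Some z) = (if z \<in> ratfun_poles f then None else Some (ratfun_eval f z))"
  by (simp add: ratfun_map_def ratfun_poles_def ratfun_eval_def denom_poly_def split_beta Let_def)

lemma quot_of_fract_cross_mult:
  assumes "f = Fract a b" and "b \<noteq> 0"
  shows "fst (quot_of_fract f) * b = a * snd (quot_of_fract f)"
proof -
  have "Fract (fst (quot_of_fract f)) (snd (quot_of_fract f)) = Fract a b"
    using assms(1) by simp
  then show ?thesis
    using eq_fract(1)[OF snd_quot_of_fract_nonzero assms(2)] by blast
qed

lemma ratfun_eval_Fract:
  assumes "f = Fract a b" and "poly (map_poly of_real b) z \<noteq> (0::complex)" and "z \<notin> ratfun_poles f"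
  shows "ratfun_eval f z = poly (map_poly of_real a) z / poly (map_poly of_real b) z"
proof -
  have "b \<noteq> 0"
    using assms(2) by auto
  with assms(1) have "poly (map_poly of_real (fst (quot_of_fract f))) z * poly (map_poly of_real b) z
      = poly (map_poly of_real a) z * poly (denom_poly f) z"
    by (metis quot_of_fract_cross_mult denom_poly_def map_poly_of_real_mult poly_mult)
  with assms(2,3) show ?thesis
    by (simp add: ratfun_eval_def ratfun_poles_def field_simps)
qed

lemma ratfun_eval_add:
  assumes "z \<notin> ratfun_poles f" "z \<notin> ratfun_poles g" "z \<notin> ratfun_poles (f + g)"
  shows "ratfun_eval (f + g) z = ratfun_eval f z + ratfun_eval g z"
proof -
  let ?nf = "fst (quot_of_fract f)" and ?df = "snd (quot_of_fract f)"
    and ?ng = "fst (quot_of_fract g)" and ?dg = "snd (quot_of_fract g)"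
  have sum: "f + g = Fract (?nf * ?dg + ?ng * ?df) (?df * ?dg)"
    by (metis Fract_quot_of_fract add_fract snd_quot_of_fract_nonzero)
  show ?thesis
    using assms
    by (subst ratfun_eval_Fract[OF sum])
       (auto simp: ratfun_eval_def ratfun_poles_def denom_poly_def map_poly_of_real_add
          map_poly_of_real_mult add_divide_distrib)
qed

lemma ratfun_eval_uminus:
  assumes "z \<notin> ratfun_poles f" "z \<notin> ratfun_poles (- f)"
  shows "ratfun_eval (- f) z = - ratfun_eval f z"
proof -
  have neg: "- f = Fract (- fst (quot_of_fract f)) (snd (quot_of_fract f))"
    by (metis Fract_quot_of_fract minus_fract)
  show ?thesis
    using assms
    by (subst ratfun_eval_Fract[OF neg])
       (auto simp: ratfun_eval_def ratfun_poles_def denom_poly_def map_poly_of_real_uminus)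
qed

lemma ratfun_eval_mult:
  assumes "z \<notin> ratfun_poles f" "z \<notin> ratfun_poles g" "z \<notin> ratfun_poles (f * g)"
  shows "ratfun_eval (f * g) z = ratfun_eval f z * ratfun_eval g z"
proof -
  have prod: "f * g = Fract (fst (quot_of_fract f) * fst (quot_of_fract g))
                      (snd (quot_of_fract f) * snd (quot_of_fract g))"
    by (metis Fract_quot_of_fract mult_fract)
  show ?thesis
    using assms
    by (subst ratfun_eval_Fract[OF prod])
       (auto simp: ratfun_eval_def ratfun_poles_def denom_poly_def map_poly_of_real_mult)
qed

lemma ratfun_eval_inverse:
  assumes "z \<notin> ratfun_poles f" "z \<notin> ratfun_poles (inverse f)"
  shows "ratfun_eval (inverse f) z = inverse (ratfun_eval f z)"
proof (cases "f = 0")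
  case True
  then show ?thesis by (simp add: ratfun_eval_def)
next
  case False
  let ?nf = "fst (quot_of_fract f)" and ?df = "snd (quot_of_fract f)"
  have inv_f: "inverse f = Fract ?df ?nf"
    by (metis Fract_quot_of_fract inverse_fract)
  have "?nf \<noteq> 0"
    using False by simp
  with inv_f have "poly (map_poly of_real (fst (quot_of_fract (inverse f)))) z * poly (map_poly of_real ?nf) z
      = poly (denom_poly f) z * poly (denom_poly (inverse f)) z"
    by (metis quot_of_fract_cross_mult denom_poly_def map_poly_of_real_mult poly_mult)
  then have "poly (map_poly of_real ?nf) z \<noteq> (0::complex)"
    using assms by (auto simp: ratfun_poles_def)
  then show ?thesis
    using assms by (subst ratfun_eval_Fract[OF inv_f]) (auto simp: ratfun_eval_def denom_poly_def)
qed

lemma ratfun_eval_const [simp]: "ratfun_eval (const_ratfun c) z = of_real c"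
  by (simp add: const_ratfun_def ratfun_eval_def denom_poly_def map_poly_pCons)

lemma ratfun_eval_to_fract_X [simp]: "ratfun_eval (to_fract [:0, 1:]) z = z"
  by (simp add: ratfun_eval_def denom_poly_def map_poly_pCons)

lemma ratfun_eval_cnj: "ratfun_eval f (cnj z) = cnj (ratfun_eval f z)"
  unfolding ratfun_eval_def denom_poly_def by (simp add: poly_cnj_real coeff_map_poly)

lemma ratfun_eval_real: "z \<in> \<real> \<Longrightarrow> ratfun_eval f z \<in> \<real>"
  by (metis Reals_cnj_iff ratfun_eval_cnj)

lemma Some_in_ext_real_line_iff [simp]: "Some z \<in> ext_real_line \<longleftrightarrow> z \<in> \<real>"
  by (auto simp: ext_real_line_def Reals_def)

lemma None_in_ext_real_line [simp]: "None \<in> ext_real_line"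
  by (simp add: ext_real_line_def)

lemma ratfun_map_Some_in_ext_real_line_iff:
  "ratfun_map f (Some z) \<in> ext_real_line \<longleftrightarrow> z \<in> ratfun_poles f \<or> ratfun_eval f z \<in> \<real>"
  by (simp add: ratfun_map_Some)

lemma ratfun_map_ext_real_line:
  assumes "w \<in> ext_real_line"
  shows "ratfun_map f w \<in> ext_real_line"
proof (cases w)
  case None
  then show ?thesis
    by (auto simp: ratfun_map_def split_beta Let_def ext_real_line_def simp flip: of_real_divide)
next
  case (Some z)
  with assms show ?thesis
    by (simp add: ratfun_map_Some_in_ext_real_line_iff ratfun_eval_real)
qed

definition common_real_points :: "real_ratfun \<Rightarrow> real_ratfun \<Rightarrow> complex set" where
  "common_real_points P1 P2 =
     {z. z \<notin> ratfun_poles P1 \<and> z \<notin> ratfun_poles P2 \<and>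
         ratfun_eval P1 z \<in> \<real> \<and> ratfun_eval P2 z \<in> \<real>}"

lemma finite_nonreal_values_on_common_real_points:
  assumes "f \<in> gen_subfield P1 P2"
  shows "finite {z \<in> common_real_points P1 P2. ratfun_eval f z \<notin> \<real>}"
  (is "finite (?E f)")
  using assms
proof (induction rule: gen_subfield.induct)
  case (const c)
  then show ?case by simp
next
  case gen1
  have "?E P1 = {}"
    by (auto simp: common_real_points_def)
  then show ?case
    by (metis finite.emptyI)
next
  case gen2
  have "?E P2 = {}"
    by (auto simp: common_real_points_def)
  then show ?case
    by (metis finite.emptyI)
next
  case (add f g)
  have "?E (f + g) \<subseteq> ?E f \<union> ?E g \<union> ratfun_poles f \<union> ratfun_poles g \<union> ratfun_poles (f + g)"
    by (auto simp: ratfun_eval_add)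
  then show ?case
    using add.IH finite_ratfun_poles by (meson finite_Un finite_subset)
next
  case (neg f)
  have "?E (- f) \<subseteq> ?E f \<union> ratfun_poles f \<union> ratfun_poles (- f)"
    by (auto simp: ratfun_eval_uminus)
  then show ?case
    using neg.IH finite_ratfun_poles by (meson finite_Un finite_subset)
next
  case (mult f g)
  have "?E (f * g) \<subseteq> ?E f \<union> ?E g \<union> ratfun_poles f \<union> ratfun_poles g \<union> ratfun_poles (f * g)"
    by (auto simp: ratfun_eval_mult)
  then show ?case
    using mult.IH finite_ratfun_poles by (meson finite_Un finite_subset)
next
  case (inv f)
  have "?E (inverse f) \<subseteq> ?E f \<union> ratfun_poles f \<union> ratfun_poles (inverse f)"
    by (auto simp: ratfun_eval_inverse)
  then show ?case
    using inv.IH finite_ratfun_poles by (meson finite_Un finite_subset)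
qed

theorem theorem3:
  fixes P1 P2 :: real_ratfun
  assumes "\<forall>c. P1 \<noteq> const_ratfun c"
    and "\<forall>c. P2 \<noteq> const_ratfun c"
    and "gen_subfield P1 P2 = UNIV"
  shows "\<exists>A :: riemann_sphere set. finite A \<and>
           ratfun_map P1 -` ext_real_line \<inter> ratfun_map P2 -` ext_real_line
             = ext_real_line \<union> A"
proof -
  let ?I = "ratfun_map P1 -` ext_real_line \<inter> ratfun_map P2 -` ext_real_line"
  let ?B = "ratfun_poles P1 \<union> ratfun_poles P2 \<union> {z \<in> common_real_points P1 P2. z \<notin> \<real>}"
  have "finite {z \<in> common_real_points P1 P2. ratfun_eval (to_fract [:0, 1:]) z \<notin> \<real>}"
    using assms(3) by (intro finite_nonreal_values_on_common_real_points) simp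
  then have "finite (Some ` ?B)"
    using finite_ratfun_poles by simp
  moreover have "?I - ext_real_line \<subseteq> Some ` ?B"
  proof
    fix w
    assume w: "w \<in> ?I - ext_real_line"
    then obtain z where "w = Some z"
      by (cases w) auto
    with w show "w \<in> Some ` ?B"
      by (auto simp: ratfun_map_Some_in_ext_real_line_iff common_real_points_def)
  qed
  moreover have "ext_real_line \<subseteq> ?I"
    using ratfun_map_ext_real_line by blast
  ultimately show ?thesis
    by (intro exI[of _ "?I - ext_real_line"]) (auto intro: finite_subset)
qed

end
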